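(* Let $\Omega\subset\mathbb{R}^2$ be open, $\lambda>0$, and let $u\in L^2(\Omega)$ satisfy $-\Delta u=\lambda u$ in $\Omega$. Let $\mathbf{x}_0\in\Omega$, $h>0$, and let $\mathbf{e}^-,\mathbf{e}^+$ be unit vectors with angle $\alpha\pi$ from $\mathbf{e}^-$ to $\mathbf{e}^+$, where $\alpha\in(0,2)$ is irrational; put $\Gamma^\pm=\{\mathbf{x}_0+t\mathbf{e}^\pm:0\le t\le h\}\subset\Omega$. Suppose $\Gamma^-$ and $\Gamma^+$ are generalized singular lines of $u$ with constant parameters $\eta_1\equiv C_1$ and $\eta_2\equiv C_2$ respectively. Then $\mathrm{Vani}(u;\mathbf{x}_0)=0$ if $u(\mathbf{x}_0)\neq0$, and $\mathrm{Vani}(u;\mathbf{x}_0)=+\infty$ if $u(\mathbf{x}_0)=0$.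
   Context: No boundary condition is imposed on $\partial\Omega$; $u$ is real-analytic in $\Omega$. A generalized singular line with parameter $\eta$ (not identically zero; here a nonzero complex constant) is a segment $\Gamma$ on which $\partial_\nu u+\eta u=0$, $\nu$ a unit normal to $\Gamma$. $\mathrm{Vani}(u;\mathbf{x}_0)$ is the smallest degree of a nonzero homogeneous term in the Taylor expansion of $u$ at $\mathbf{x}_0$ ($+\infty$ if all vanish). *)

theory Defs
  imports "HOL-Analysis.Analysis" "HOL-Library.Extended_Nat"
begin

type_synonym pt = "real \<times> real"

definition dirderiv :: "pt \<Rightarrow> (pt \<Rightarrow> complex) \<Rightarrow> pt \<Rightarrow> complex" where
  "dirderiv e f x = vector_derivative (\<lambda>t. f (x + t *\<^sub>R e)) (at 0)"

definition pdiff :: "nat \<Rightarrow> nat \<Rightarrow> (pt \<Rightarrow> complex) \<Rightarrow> pt \<Rightarrow> complex" where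
  "pdiff i j f = (dirderiv (1,0) ^^ i) ((dirderiv (0,1) ^^ j) f)"

definition laplacian :: "(pt \<Rightarrow> complex) \<Rightarrow> pt \<Rightarrow> complex" where
  "laplacian f x = pdiff 2 0 f x + pdiff 0 2 f x"

text \<open>Real-analyticity: locally an absolutely convergent power series.\<close>
definition real_analytic_on :: "(pt \<Rightarrow> complex) \<Rightarrow> pt set \<Rightarrow> bool" where
  "real_analytic_on f S \<longleftrightarrow>
     (\<forall>x\<in>S. \<exists>r>0. \<exists>c :: nat \<Rightarrow> nat \<Rightarrow> complex. \<forall>y\<in>ball x r.
        ((\<lambda>(i,j). c i j * of_real ((fst y - fst x) ^ i * (snd y - snd x) ^ j))
           has_sum f y) UNIV)"

definition taylor_hom :: "(pt \<Rightarrow> complex) \<Rightarrow> pt \<Rightarrow> nat \<Rightarrow> pt \<Rightarrow> complex" where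
  "taylor_hom f x0 n y =
     (\<Sum>i\<le>n. pdiff i (n - i) f x0 / of_nat (fact i * fact (n - i))
              * of_real ((fst y - fst x0) ^ i * (snd y - snd x0) ^ (n - i)))"

definition Vani :: "(pt \<Rightarrow> complex) \<Rightarrow> pt \<Rightarrow> enat" where
  "Vani f x0 = (if \<exists>n. taylor_hom f x0 n \<noteq> (\<lambda>_. 0)
                then enat (LEAST n. taylor_hom f x0 n \<noteq> (\<lambda>_. 0)) else \<infinity>)"

definition rot :: "real \<Rightarrow> pt \<Rightarrow> pt" where
  "rot \<theta> v = (cos \<theta> * fst v - sin \<theta> * snd v, sin \<theta> * fst v + cos \<theta> * snd v)"

definition gen_singular_line :: "(pt \<Rightarrow> complex) \<Rightarrow> pt \<Rightarrow> pt \<Rightarrow> real \<Rightarrow> complex \<Rightarrow> bool" where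
  "gen_singular_line u x0 e h \<eta> \<longleftrightarrow>
     (\<forall>x\<in>closed_segment x0 (x0 + h *\<^sub>R e).
        dirderiv (rot (pi/2) e) u x + \<eta> * u x = 0)"

end

theory Submission
  imports Defs
begin

(* Near x0 write u as a double power series sum c i j x^i y^j, grouped into homogeneous
   parts P_n of degree n.  The Helmholtz equation becomes the coefficient recurrence
   Delta P_(n+2) = -lam P_n, and restricting the Robin condition d_nu u + eta u = 0 to a ray
   x0 + t e and comparing powers of t gives d_nu P_(n+1) + eta P_n = 0 on that ray.
   If u x0 = 0, induction on the degree shows that every P_n vanishes: once the lower parts
   vanish, P_N (N = n + 1) is a harmonic homogeneous polynomial, hence a z^N + b (cnj z)^N,
   and its normal derivative vanishes on both rays.  This gives a z^N = b (cnj z)^N at two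
   points whose arguments differ by alpha pi, so b (cnj z)^N (cis (N alpha pi) - cis (- N alpha pi)) = 0,
   and irrationality of alpha forces a = b = 0.  Hence u vanishes near x0. *)

section \<open>Series and power series\<close>

lemma has_sum_antidiagonal_sums:
  fixes f :: "nat \<times> nat \<Rightarrow> 'a::{topological_comm_monoid_add,t3_space}"
  assumes "(f has_sum s) UNIV"
  shows "(\<lambda>n. \<Sum>i\<le>n. f (i, n - i)) sums s"
proof -
  have bij: "bij_betw (\<lambda>(n::nat, i::nat). (i, n - i)) (SIGMA n:UNIV. {..n}) UNIV"
    by (rule bij_betw_byWitness[where f'="\<lambda>(i, j). (i + j, i)"]) auto
  have "((\<lambda>(n, i). f (i, n - i)) has_sum s) (SIGMA n:UNIV. {..n})"
    using has_sum_reindex_bij_betw[OF bij, of f] assms by (simp add: case_prod_unfold)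
  then have "((\<lambda>n. \<Sum>i\<le>n. f (i, n - i)) has_sum s) UNIV"
    by (rule has_sum_SigmaD) (auto intro: has_sum_finite)
  then show ?thesis
    by (rule has_sum_imp_sums)
qed

lemma powser_coeffs_eq_0_if_sums_0_at_right:
  fixes a :: "nat \<Rightarrow> 'a::{real_normed_field,banach}"
  assumes "\<delta> > 0" and sums0: "\<And>t. 0 < t \<Longrightarrow> t < \<delta> \<Longrightarrow> (\<lambda>n. a n * of_real t ^ n) sums 0"
  shows "a n = 0"
proof (induction n rule: less_induct)
  case (less n)
  define tail where "tail z = (\<Sum>i. a (i + n) * z ^ i)" for z :: 'a
  have tail_sums0: "(\<lambda>i. a (i + n) * of_real t ^ i) sums 0" if "0 < t" "t < \<delta>" for t
  proof -
    have "(\<lambda>i. a (i + n) * of_real t ^ (i + n)) sums 0"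
      using sums_iff_shift[of "\<lambda>i. a i * of_real t ^ i" n 0] sums0[OF that] less.IH by simp
    then have "(\<lambda>i. a (i + n) * of_real t ^ (i + n) / of_real t ^ n) sums 0"
      using sums_divide by fastforce
    then show ?thesis
      using that by (simp add: power_add)
  qed
  have "summable (\<lambda>i. a (i + n) * of_real (\<delta> / 2) ^ i)"
    using tail_sums0[of "\<delta> / 2"] \<open>\<delta> > 0\<close> by (auto simp: sums_iff)
  then have "isCont tail 0"
    unfolding tail_def by (rule isCont_powser) (use \<open>\<delta> > 0\<close> in simp)
  moreover have "isCont (of_real :: real \<Rightarrow> 'a) 0"
    by (intro continuous_intros)
  ultimately have "isCont (\<lambda>t::real. tail (of_real t)) 0"
    using isCont_o2[where f="of_real :: real \<Rightarrow> 'a" and a=0 and g=tail] by simp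
  then have "((\<lambda>t::real. tail (of_real t)) \<longlongrightarrow> tail 0) (at_right 0)"
    by (simp add: isCont_def filterlim_at_split)
  moreover have "\<forall>\<^sub>F t in at_right 0. tail (of_real t) = 0"
    using eventually_at_right_real[OF \<open>\<delta> > 0\<close>]
    by eventually_elim (use tail_sums0 in \<open>auto simp: tail_def sums_iff\<close>)
  ultimately have "tail 0 = 0"
    using tendsto_unique tendsto_eventually by (metis trivial_limit_at_right_real)
  then show ?case
    using powser_zero[of "\<lambda>i. a (i + n)"] by (simp add: tail_def)
qed

lemma norm_suminf_tail_le:
  fixes g :: "nat \<Rightarrow> 'a::banach"
  assumes bound: "\<And>n. norm (g n) \<le> M n * c" and "summable M"
  shows "norm ((\<Sum>i<n. g i) - (\<Sum>i. g i)) \<le> (\<Sum>i. M (i + n)) * c"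
proof -
  have "summable g"
    by (rule summable_comparison_test[OF _ summable_mult2[OF \<open>summable M\<close>]]) (use bound in auto)
  then have "norm ((\<Sum>i<n. g i) - (\<Sum>i. g i)) = norm (\<Sum>i. g (i + n))"
    using suminf_split_initial_segment[OF \<open>summable g\<close>, where k=n] by (simp add: norm_minus_commute)
  also have "\<dots> \<le> (\<Sum>i. M (i + n) * c)"
    using bound by (intro norm_suminf_le summable_mult2 summable_ignore_initial_segment \<open>summable M\<close>)
  also have "\<dots> = (\<Sum>i. M (i + n)) * c"
    by (intro suminf_mult2[symmetric] summable_ignore_initial_segment \<open>summable M\<close>)
  finally show ?thesis .
qed

lemma has_derivative_suminf_dominated:
  fixes f :: "nat \<Rightarrow> 'a::real_normed_vector \<Rightarrow> 'b::banach"
  assumes "convex S" "open S" "x \<in> S"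
    and deriv: "\<And>n y. y \<in> S \<Longrightarrow> (f n has_derivative f' n y) (at y)"
    and bound: "\<And>n y h. y \<in> S \<Longrightarrow> norm (f' n y h) \<le> M n * norm h"
    and "summable M"
    and summable_f: "\<And>y. y \<in> S \<Longrightarrow> summable (\<lambda>n. f n y)"
  shows "((\<lambda>y. \<Sum>n. f n y) has_derivative (\<lambda>h. \<Sum>n. f' n x h)) (at x)"
proof -
  have unif: "\<forall>\<^sub>F n in sequentially. \<forall>y\<in>S. \<forall>h.
      norm ((\<Sum>i<n. f' i y h) - (\<Sum>i. f' i y h)) \<le> e * norm h" if "e > 0" for e
  proof -
    obtain N where N: "\<And>n. n \<ge> N \<Longrightarrow> norm (\<Sum>i. M (i + n)) < e"
      using suminf_exist_split[OF \<open>e > 0\<close> \<open>summable M\<close>] by blast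
    have "norm ((\<Sum>i<n. f' i y h) - (\<Sum>i. f' i y h)) \<le> e * norm h"
      if "n \<ge> N" "y \<in> S" for n y h
    proof -
      have "norm ((\<Sum>i<n. f' i y h) - (\<Sum>i. f' i y h)) \<le> (\<Sum>i. M (i + n)) * norm h"
        by (rule norm_suminf_tail_le[OF bound[OF \<open>y \<in> S\<close>] \<open>summable M\<close>])
      also have "\<dots> \<le> e * norm h"
        using N[OF \<open>n \<ge> N\<close>] by (intro mult_right_mono) (simp_all add: abs_less_iff)
      finally show ?thesis .
    qed
    then show ?thesis
      unfolding eventually_sequentially by blast
  qed
  have "\<exists>g. \<forall>y\<in>S. (\<lambda>n. f n y) sums g y \<and>
      (g has_derivative (\<lambda>h. \<Sum>n. f' n y h)) (at y within S)"
    by (rule has_derivative_series[where f=f and f'=f' and g'="\<lambda>y h. \<Sum>n. f' n y h",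
          OF \<open>convex S\<close> _ unif \<open>x \<in> S\<close> summable_sums[OF summable_f[OF \<open>x \<in> S\<close>]]])
      (rule has_derivative_at_withinI[OF deriv])
  then obtain g where g: "\<And>y. y \<in> S \<Longrightarrow> (\<lambda>n. f n y) sums g y \<and>
      (g has_derivative (\<lambda>h. \<Sum>n. f' n y h)) (at y within S)"
    by blast
  have "(g has_derivative (\<lambda>h. \<Sum>n. f' n x h)) (at x)"
    using g[OF \<open>x \<in> S\<close>] at_within_open[OF \<open>x \<in> S\<close> \<open>open S\<close>] by simp
  then show ?thesis
    by (rule has_derivative_transform_within_open[OF _ \<open>open S\<close> \<open>x \<in> S\<close>])
      (use g in \<open>simp add: sums_iff\<close>)
qed

section \<open>Directional derivatives and the vanishing order\<close>

lemma dirderiv_cong_open: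
  assumes "open S" "x \<in> S" "\<And>y. y \<in> S \<Longrightarrow> f y = g y"
  shows "dirderiv d f x = dirderiv d g x"
proof -
  have "open ((\<lambda>t::real. x + t *\<^sub>R d) -` S)"
    by (intro open_vimage \<open>open S\<close> continuous_intros)
  moreover have "0 \<in> (\<lambda>t::real. x + t *\<^sub>R d) -` S"
    using \<open>x \<in> S\<close> by simp
  ultimately have "\<forall>\<^sub>F t in nhds 0. t \<in> (\<lambda>t::real. x + t *\<^sub>R d) -` S"
    by (rule eventually_nhds_in_open)
  then have "\<forall>\<^sub>F t in nhds 0. t \<in> UNIV \<longrightarrow> f (x + t *\<^sub>R d) = g (x + t *\<^sub>R d)"
    by eventually_elim (simp add: assms(3))
  then show ?thesis
    unfolding dirderiv_def by (rule vector_derivative_cong_eq) simp_all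
qed

lemma dirderiv_eq_if_has_derivative:
  assumes "(f has_derivative f') (at x)"
  shows "dirderiv d f x = f' d"
proof -
  have "((\<lambda>t::real. x + t *\<^sub>R d) has_derivative (\<lambda>t. t *\<^sub>R d)) (at 0)"
    by (auto intro!: derivative_eq_intros)
  from diff_chain_at[OF this, of f f'] assms
  have "((\<lambda>t. f (x + t *\<^sub>R d)) has_derivative (\<lambda>t. f' (t *\<^sub>R d))) (at 0)"
    by (simp add: o_def)
  moreover have "f' (t *\<^sub>R d) = t *\<^sub>R f' d" for t
    using has_derivative_bounded_linear[OF assms] by (simp add: linear_simps)
  ultimately have "((\<lambda>t. f (x + t *\<^sub>R d)) has_vector_derivative f' d) (at 0)"
    by (simp add: has_vector_derivative_def)
  then show ?thesis
    unfolding dirderiv_def by (rule vector_derivative_at)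
qed

lemma pdiff_eq_0_if_vanishes_on_open:
  assumes "open S" "x \<in> S" "\<And>y. y \<in> S \<Longrightarrow> f y = 0"
  shows "pdiff i j f x = 0"
proof -
  have iterate_0: "\<forall>y\<in>S. (dirderiv d ^^ k) g y = 0" if "\<forall>y\<in>S. g y = 0" for d k g
  proof (induction k)
    case 0
    show ?case using that by simp
  next
    case (Suc k)
    show ?case
    proof
      fix y assume "y \<in> S"
      have "(dirderiv d ^^ Suc k) g y = dirderiv d ((dirderiv d ^^ k) g) y"
        by simp
      also have "\<dots> = dirderiv d (\<lambda>_. 0) y"
        using Suc.IH by (intro dirderiv_cong_open[OF \<open>open S\<close> \<open>y \<in> S\<close>]) simp
      also have "\<dots> = 0"
        by (rule dirderiv_eq_if_has_derivative[OF has_derivative_const])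
      finally show "(dirderiv d ^^ Suc k) g y = 0" .
    qed
  qed
  have "\<forall>y\<in>S. (dirderiv (1, 0) ^^ i) ((dirderiv (0, 1) ^^ j) f) y = 0"
    by (intro iterate_0) (simp add: assms(3))
  then show ?thesis
    unfolding pdiff_def using \<open>x \<in> S\<close> by simp
qed

lemma Vani_eq_0_if_nonzero:
  assumes "u x0 \<noteq> 0"
  shows "Vani u x0 = 0"
proof -
  have "taylor_hom u x0 0 = (\<lambda>_. u x0)"
    by (simp add: taylor_hom_def pdiff_def fun_eq_iff)
  then have "taylor_hom u x0 0 \<noteq> (\<lambda>_. 0)"
    using assms by (simp add: fun_eq_iff)
  then show ?thesis
    unfolding Vani_def by (auto simp: zero_enat_def intro: Least_eq_0)
qed

lemma Vani_eq_infinity_if_vanishes_on_open: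
  assumes "open S" "x0 \<in> S" "\<And>y. y \<in> S \<Longrightarrow> u y = 0"
  shows "Vani u x0 = \<infinity>"
proof -
  have "taylor_hom u x0 n = (\<lambda>_. 0)" for n
    unfolding taylor_hom_def using pdiff_eq_0_if_vanishes_on_open[OF assms] by (simp add: fun_eq_iff)
  then show ?thesis
    unfolding Vani_def by simp
qed

section \<open>Homogeneous polynomials in two variables\<close>

definition hom_poly :: "(nat \<Rightarrow> complex) \<Rightarrow> nat \<Rightarrow> pt \<Rightarrow> complex" where
  "hom_poly p n v = (\<Sum>i\<le>n. p i * of_real (fst v) ^ i * of_real (snd v) ^ (n - i))"

lemma hom_poly_cong: "(\<And>i. i \<le> n \<Longrightarrow> p i = q i) \<Longrightarrow> hom_poly p n = hom_poly q n"
  unfolding hom_poly_def[abs_def] by simp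

lemma hom_poly_add: "hom_poly (\<lambda>i. p i + q i) n v = hom_poly p n v + hom_poly q n v"
  unfolding hom_poly_def by (simp add: sum.distrib algebra_simps)

lemma hom_poly_cmult: "hom_poly (\<lambda>i. a * p i) n v = a * hom_poly p n v"
  unfolding hom_poly_def by (simp add: sum_distrib_left mult.assoc)

lemma hom_poly_lincomb: "hom_poly (\<lambda>i. a * p i + b * q i) n v = a * hom_poly p n v + b * hom_poly q n v"
  by (simp add: hom_poly_add hom_poly_cmult)

lemma hom_poly_scaleR: "hom_poly p n (t *\<^sub>R v) = of_real t ^ n * hom_poly p n v"
  unfolding hom_poly_def sum_distrib_left
proof (rule sum.cong[OF refl])
  fix i assume "i \<in> {..n}"
  then have "(of_real t :: complex) ^ n = of_real t ^ i * of_real t ^ (n - i)"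
    by (simp flip: power_add)
  then show "p i * of_real (fst (t *\<^sub>R v)) ^ i * of_real (snd (t *\<^sub>R v)) ^ (n - i) =
      of_real t ^ n * (p i * of_real (fst v) ^ i * of_real (snd v) ^ (n - i))"
    by (simp add: power_mult_distrib)
qed

lemma norm_hom_poly_le:
  assumes "norm v \<le> \<sigma>"
  shows "norm (hom_poly p n v) \<le> (\<Sum>i\<le>n. norm (p i)) * \<sigma> ^ n"
proof -
  have fst_le: "\<bar>fst v\<bar> \<le> \<sigma>" and snd_le: "\<bar>snd v\<bar> \<le> \<sigma>"
    using assms norm_fst_le[of "fst v" "snd v"] norm_snd_le[of "snd v" "fst v"] by auto
  have "norm (hom_poly p n v) \<le> (\<Sum>i\<le>n. norm (p i) * (\<bar>fst v\<bar> ^ i * \<bar>snd v\<bar> ^ (n - i)))"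
    unfolding hom_poly_def
    by (rule order_trans[OF norm_sum]) (simp add: norm_mult norm_power mult.assoc)
  also have "\<dots> \<le> (\<Sum>i\<le>n. norm (p i) * \<sigma> ^ n)"
  proof (intro sum_mono mult_left_mono)
    fix i assume "i \<in> {..n}"
    then have "\<sigma> ^ n = \<sigma> ^ i * \<sigma> ^ (n - i)"
      by (simp flip: power_add)
    moreover have "\<bar>fst v\<bar> ^ i * \<bar>snd v\<bar> ^ (n - i) \<le> \<sigma> ^ i * \<sigma> ^ (n - i)"
      using fst_le snd_le by (intro mult_mono power_mono) auto
    ultimately show "\<bar>fst v\<bar> ^ i * \<bar>snd v\<bar> ^ (n - i) \<le> \<sigma> ^ n"
      by simp
  qed simp
  finally show ?thesis
    by (simp add: sum_distrib_right)
qed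

definition hom_dirderiv :: "pt \<Rightarrow> (nat \<Rightarrow> complex) \<Rightarrow> nat \<Rightarrow> pt \<Rightarrow> complex" where
  "hom_dirderiv d p n v =
     of_real (fst d) * hom_poly (\<lambda>i. of_nat (Suc i) * p (Suc i)) n v
   + of_real (snd d) * hom_poly (\<lambda>i. of_nat (Suc n - i) * p i) n v"

lemma hom_dirderiv_scaleR: "hom_dirderiv d p n (t *\<^sub>R v) = of_real t ^ n * hom_dirderiv d p n v"
  by (simp add: hom_dirderiv_def hom_poly_scaleR algebra_simps)

lemma hom_dirderiv_cong:
  "(\<And>i. i \<le> Suc n \<Longrightarrow> p i = q i) \<Longrightarrow> hom_dirderiv d p n v = hom_dirderiv d q n v"
  unfolding hom_dirderiv_def by (simp cong: hom_poly_cong)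

lemma hom_dirderiv_lincomb:
  "hom_dirderiv d (\<lambda>i. a * p i + b * q i) n v = a * hom_dirderiv d p n v + b * hom_dirderiv d q n v"
proof -
  have "(\<lambda>i. of_nat (Suc i) * (a * p (Suc i) + b * q (Suc i)))
      = (\<lambda>i. a * (of_nat (Suc i) * p (Suc i)) + b * (of_nat (Suc i) * q (Suc i)))"
    "(\<lambda>i. of_nat (Suc n - i) * (a * p i + b * q i))
      = (\<lambda>i. a * (of_nat (Suc n - i) * p i) + b * (of_nat (Suc n - i) * q i))"
    by (simp_all add: fun_eq_iff algebra_simps)
  then show ?thesis
    unfolding hom_dirderiv_def by (simp only: hom_poly_lincomb) (simp add: algebra_simps)
qed

lemma has_derivative_hom_poly:
  "(hom_poly p (Suc n) has_derivative (\<lambda>d. hom_dirderiv d p n v)) (at v within S)"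
proof -
  let ?X = "of_real (fst v) :: complex" and ?Y = "of_real (snd v) :: complex"
  have monomial: "((\<lambda>v. p i * of_real (fst v) ^ i * of_real (snd v) ^ k) has_derivative
      (\<lambda>d. of_real (fst d) * (p i * (of_nat i * ?X ^ (i - 1)) * ?Y ^ k)
         + of_real (snd d) * (p i * ?X ^ i * (of_nat k * ?Y ^ (k - 1))))) (at v within S)" for i k
    by (rule derivative_eq_intros refl)+ (simp add: fun_eq_iff algebra_simps)
  have sum_x: "(\<Sum>i\<le>Suc n. p i * (of_nat i * ?X ^ (i - 1)) * ?Y ^ (Suc n - i))
      = hom_poly (\<lambda>i. of_nat (Suc i) * p (Suc i)) n v"
    unfolding hom_poly_def by (subst sum.atMost_Suc_shift) (simp add: algebra_simps)
  have sum_y: "(\<Sum>i\<le>Suc n. p i * ?X ^ i * (of_nat (Suc n - i) * ?Y ^ (Suc n - i - 1)))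
      = hom_poly (\<lambda>i. of_nat (Suc n - i) * p i) n v"
    unfolding hom_poly_def
    by (subst sum.atMost_Suc) (auto intro!: sum.cong simp: Suc_diff_le algebra_simps)
  have "(hom_poly p (Suc n) has_derivative (\<lambda>d. \<Sum>i\<le>Suc n.
        of_real (fst d) * (p i * (of_nat i * ?X ^ (i - 1)) * ?Y ^ (Suc n - i))
      + of_real (snd d) * (p i * ?X ^ i * (of_nat (Suc n - i) * ?Y ^ (Suc n - i - 1))))) (at v within S)"
    unfolding hom_poly_def[abs_def] by (rule has_derivative_sum) (rule monomial)
  then show ?thesis
    unfolding sum.distrib sum_distrib_left[symmetric] sum_x sum_y hom_dirderiv_def .
qed

section \<open>Harmonic homogeneous polynomials\<close>

text \<open>p i is the coefficient of x^i y^(N - i) in a homogeneous polynomial of degree N;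
  the condition says that the Laplacian of this polynomial vanishes.\<close>
definition harmonic_coeffs :: "nat \<Rightarrow> (nat \<Rightarrow> complex) \<Rightarrow> bool" where
  "harmonic_coeffs N p \<longleftrightarrow> (\<forall>i j. i + j + 2 = N \<longrightarrow>
     of_nat (Suc i * Suc (Suc i)) * p (Suc (Suc i)) + of_nat (Suc j * Suc (Suc j)) * p i = 0)"

definition binom_coeffs :: "complex \<Rightarrow> nat \<Rightarrow> nat \<Rightarrow> complex" where
  "binom_coeffs w N i = of_nat (N choose i) * w ^ (N - i)"

lemma hom_poly_binom_coeffs:
  "hom_poly (binom_coeffs w N) N v = (of_real (fst v) + w * of_real (snd v)) ^ N"
  by (simp add: hom_poly_def binom_coeffs_def binomial_ring power_mult_distrib mult_ac)

lemma hom_dirderiv_binom_coeffs: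
  "hom_dirderiv d (binom_coeffs w (Suc n)) n v
     = of_nat (Suc n) * (of_real (fst d) + w * of_real (snd d)) * (of_real (fst v) + w * of_real (snd v)) ^ n"
proof -
  have "(\<lambda>i. of_nat (Suc i) * binom_coeffs w (Suc n) (Suc i)) = (\<lambda>i. of_nat (Suc n) * binom_coeffs w n i)"
  proof
    fix i
    have "of_nat (Suc i) * of_nat (Suc n choose Suc i) = (of_nat (Suc n) * of_nat (n choose i) :: complex)"
      by (metis Suc_times_binomial of_nat_mult)
    then show "of_nat (Suc i) * binom_coeffs w (Suc n) (Suc i) = of_nat (Suc n) * binom_coeffs w n i"
      unfolding binom_coeffs_def diff_Suc_Suc by (metis mult.assoc)
  qed
  moreover have "hom_poly (\<lambda>i. of_nat (Suc n - i) * binom_coeffs w (Suc n) i) n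
      = hom_poly (\<lambda>i. of_nat (Suc n) * w * binom_coeffs w n i) n"
  proof (rule hom_poly_cong)
    fix i assume "i \<le> n"
    then have "of_nat (Suc n - i) * of_nat (Suc n choose i) = (of_nat (Suc n) * of_nat (n choose i) :: complex)"
      using binomial_absorb_comp[of "Suc n" i] by (metis diff_Suc_1 of_nat_mult)
    moreover have "w ^ (Suc n - i) = w * w ^ (n - i)"
      using \<open>i \<le> n\<close> by (simp add: Suc_diff_le)
    ultimately show "of_nat (Suc n - i) * binom_coeffs w (Suc n) i = of_nat (Suc n) * w * binom_coeffs w n i"
      unfolding binom_coeffs_def by (metis (no_types, lifting) mult.assoc mult.left_commute)
  qed
  ultimately have "hom_dirderiv d (binom_coeffs w (Suc n)) n v
      = of_real (fst d) * (of_nat (Suc n) * hom_poly (binom_coeffs w n) n v)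
      + of_real (snd d) * (of_nat (Suc n) * w * hom_poly (binom_coeffs w n) n v)"
    unfolding hom_dirderiv_def by (simp only: hom_poly_cmult)
  then show ?thesis
    by (simp add: hom_poly_binom_coeffs algebra_simps)
qed

lemma harmonic_coeffs_binom_coeffs:
  assumes "w ^ 2 = -1"
  shows "harmonic_coeffs N (binom_coeffs w N)"
  unfolding harmonic_coeffs_def
proof (intro allI impI)
  fix i j assume ij: "i + j + 2 = N"
  have absorb: "Suc k * (N choose Suc k) = (N - k) * (N choose k)" for k
    using binomial_absorption[of k N] binomial_absorb_comp[of N k] by simp
  have "N - Suc i = Suc j" "N - i = Suc (Suc j)"
    using ij by auto
  then have "Suc (Suc i) * (N choose Suc (Suc i)) = Suc j * (N choose Suc i)"
    and "Suc i * (N choose Suc i) = Suc (Suc j) * (N choose i)"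
    using absorb[of "Suc i"] absorb[of i] by simp_all
  then have binom_eq: "Suc i * Suc (Suc i) * (N choose Suc (Suc i)) = Suc j * Suc (Suc j) * (N choose i)"
    by (metis mult.assoc mult.left_commute)
  have coeff_eq: "of_nat (Suc i * Suc (Suc i)) * of_nat (N choose Suc (Suc i))
      = (of_nat (Suc j * Suc (Suc j)) * of_nat (N choose i) :: complex)"
    using binom_eq by (metis of_nat_mult)
  have "w ^ (N - Suc (Suc i)) = w ^ j" "w ^ (N - i) = w ^ j * w ^ 2"
    using ij[symmetric] by (simp_all add: numeral_2_eq_2 mult_ac)
  then have "of_nat (Suc i * Suc (Suc i)) * binom_coeffs w N (Suc (Suc i))
      + of_nat (Suc j * Suc (Suc j)) * binom_coeffs w N i
      = (of_nat (Suc i * Suc (Suc i)) * of_nat (N choose Suc (Suc i))) * w ^ j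
        + (of_nat (Suc j * Suc (Suc j)) * of_nat (N choose i)) * (w ^ j * w ^ 2)"
    unfolding binom_coeffs_def by (simp only: mult.assoc)
  also have "\<dots> = 0"
    unfolding coeff_eq assms by simp
  finally show "of_nat (Suc i * Suc (Suc i)) * binom_coeffs w N (Suc (Suc i))
      + of_nat (Suc j * Suc (Suc j)) * binom_coeffs w N i = 0" .
qed

lemma harmonic_coeffs_lincomb:
  assumes "harmonic_coeffs N p" "harmonic_coeffs N q"
  shows "harmonic_coeffs N (\<lambda>i. a * p i + b * q i)"
  unfolding harmonic_coeffs_def
proof (intro allI impI)
  fix i j assume "i + j + 2 = N"
  let ?A = "of_nat (Suc i * Suc (Suc i)) :: complex" and ?B = "of_nat (Suc j * Suc (Suc j)) :: complex"
  have "?A * p (Suc (Suc i)) + ?B * p i = 0" "?A * q (Suc (Suc i)) + ?B * q i = 0"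
    using assms \<open>i + j + 2 = N\<close> unfolding harmonic_coeffs_def by blast+
  moreover have "?A * (a * p (Suc (Suc i)) + b * q (Suc (Suc i))) + ?B * (a * p i + b * q i)
      = a * (?A * p (Suc (Suc i)) + ?B * p i) + b * (?A * q (Suc (Suc i)) + ?B * q i)"
    by (simp only: algebra_simps)
  ultimately show "?A * (a * p (Suc (Suc i)) + b * q (Suc (Suc i))) + ?B * (a * p i + b * q i) = 0"
    by simp
qed

lemma harmonic_coeffs_eq_0:
  assumes "harmonic_coeffs N p" "p 0 = 0" "p 1 = 0" "i \<le> N"
  shows "p i = 0"
  using \<open>i \<le> N\<close>
proof (induction i rule: less_induct)
  case (less i)
  show ?case
  proof (cases i)
    case (Suc k)
    show ?thesis
    proof (cases k)
      case (Suc m)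
      have "m + (N - 2 - m) + 2 = N"
        using less.prems \<open>i = Suc k\<close> Suc by simp
      then have "of_nat (Suc m * Suc (Suc m)) * p (Suc (Suc m))
          + of_nat (Suc (N - 2 - m) * Suc (Suc (N - 2 - m))) * p m = 0"
        using assms(1) unfolding harmonic_coeffs_def by blast
      moreover have "p m = 0"
        using less.IH[of m] less.prems \<open>i = Suc k\<close> Suc by simp
      ultimately show ?thesis
        using \<open>i = Suc k\<close> Suc by (simp del: of_nat_Suc)
    qed (use assms(3) \<open>i = Suc k\<close> in simp)
  qed (use assms(2) in simp)
qed

text \<open>The coefficients of (x + iy)^N and (x - iy)^N are read off from p 0 and p 1,
  which determine a harmonic coefficient sequence by harmonic_coeffs_eq_0.\<close>
lemma harmonic_coeffs_decomp:
  assumes "harmonic_coeffs (Suc n) p"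
  obtains a b where "\<And>i. i \<le> Suc n \<Longrightarrow> p i = a * binom_coeffs \<i> (Suc n) i + b * binom_coeffs (-\<i>) (Suc n) i"
proof
  define a where "a = (p 1 / of_nat (Suc n) - \<i> * p 0) / (2 * \<i> ^ n)"
  define b where "b = (p 1 / of_nat (Suc n) + \<i> * p 0) / (2 * (-\<i>) ^ n)"
  let ?d = "\<lambda>i. 1 * p i + (- 1) * (a * binom_coeffs \<i> (Suc n) i + b * binom_coeffs (-\<i>) (Suc n) i)"
  have "harmonic_coeffs (Suc n) ?d"
    by (intro harmonic_coeffs_lincomb harmonic_coeffs_binom_coeffs assms) (simp_all add: power2_eq_square)
  moreover have "(of_nat (Suc n) :: complex) \<noteq> 0"
    by (simp del: of_nat_Suc)
  then have "?d 0 = 0" "?d 1 = 0"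
    by (simp_all add: a_def b_def binom_coeffs_def field_simps power_Suc del: of_nat_Suc)
  ultimately have "?d i = 0" if "i \<le> Suc n" for i
    using harmonic_coeffs_eq_0 that by blast
  then show "p i = a * binom_coeffs \<i> (Suc n) i + b * binom_coeffs (-\<i>) (Suc n) i" if "i \<le> Suc n" for i
    using that by (simp add: algebra_simps)
qed

definition complex_of_pt :: "pt \<Rightarrow> complex" where
  "complex_of_pt v = Complex (fst v) (snd v)"

lemma complex_of_pt_rot: "complex_of_pt (rot \<theta> v) = cis \<theta> * complex_of_pt v"
  by (simp add: complex_of_pt_def rot_def complex_eq_iff)

lemma complex_of_pt_eq_0_iff: "complex_of_pt v = 0 \<longleftrightarrow> v = 0"
  by (simp add: complex_of_pt_def complex_eq_iff prod_eq_iff)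

lemma hom_dirderiv_normal_eq_0_iff:
  assumes "\<And>i. i \<le> Suc n \<Longrightarrow> p i = a * binom_coeffs \<i> (Suc n) i + b * binom_coeffs (-\<i>) (Suc n) i"
  shows "hom_dirderiv (rot (pi / 2) v) p n v = 0
           \<longleftrightarrow> a * complex_of_pt v ^ Suc n = b * cnj (complex_of_pt v) ^ Suc n"
proof -
  let ?d = "rot (pi / 2) v" and ?z = "complex_of_pt v"
  have identities:
    "of_real (fst v) + \<i> * of_real (snd v) = ?z"
    "of_real (fst v) + - \<i> * of_real (snd v) = cnj ?z"
    "of_real (fst ?d) + \<i> * of_real (snd ?d) = \<i> * ?z"
    "of_real (fst ?d) + - \<i> * of_real (snd ?d) = - \<i> * cnj ?z"
    by (simp_all add: complex_of_pt_def rot_def complex_eq_iff)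
  have "hom_dirderiv ?d p n v
      = a * hom_dirderiv ?d (binom_coeffs \<i> (Suc n)) n v + b * hom_dirderiv ?d (binom_coeffs (-\<i>) (Suc n)) n v"
    using hom_dirderiv_cong[OF assms, where d="?d" and v=v] by (simp only: hom_dirderiv_lincomb)
  also have "\<dots> = a * (of_nat (Suc n) * (\<i> * ?z) * ?z ^ n) + b * (of_nat (Suc n) * (- \<i> * cnj ?z) * cnj ?z ^ n)"
    unfolding hom_dirderiv_binom_coeffs identities ..
  also have "\<dots> = \<i> * of_nat (Suc n) * (a * ?z ^ Suc n - b * cnj ?z ^ Suc n)"
    by (simp add: algebra_simps)
  finally have "hom_dirderiv ?d p n v = \<i> * of_nat (Suc n) * (a * ?z ^ Suc n - b * cnj ?z ^ Suc n)" .
  moreover have "\<i> * of_nat (Suc n) \<noteq> (0 :: complex)"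
    by (simp del: of_nat_Suc)
  ultimately show ?thesis
    by (metis mult_eq_0_iff right_minus_eq)
qed

lemma in_Ints_if_cis_eq_cis_uminus:
  assumes "cis (x * pi) = cis (- (x * pi))"
  shows "x \<in> \<int>"
proof -
  have "cis (2 * (x * pi)) = cis (x * pi) * cis (x * pi)"
    by (simp only: cis_mult mult_2)
  also have "\<dots> = cis (- (x * pi)) * cis (x * pi)"
    by (simp only: assms)
  also have "\<dots> = 1"
    by (simp add: cis_mult)
  finally have "cos (2 * (x * pi)) = 1"
    by (metis cis.sel(1) one_complex.sel(1))
  then obtain k :: int where "2 * (x * pi) = of_int k * 2 * pi"
    using cos_one_2pi_int by blast
  then show ?thesis
    by simp
qed

lemma cis_neq_cis_uminus_if_irrational:
  assumes "\<alpha> \<notin> \<rat>" "N > 0"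
  shows "cis (real N * (\<alpha> * pi)) \<noteq> cis (- (real N * (\<alpha> * pi)))"
proof
  assume "cis (real N * (\<alpha> * pi)) = cis (- (real N * (\<alpha> * pi)))"
  then have "real N * \<alpha> \<in> \<int>"
    by (intro in_Ints_if_cis_eq_cis_uminus) (simp add: mult.assoc)
  then obtain k :: int where "real N * \<alpha> = of_int k"
    by (auto elim: Ints_cases)
  then have "\<alpha> = of_int k / of_nat N"
    using \<open>N > 0\<close> by (simp add: field_simps)
  then have "\<alpha> \<in> \<rat>"
    by (simp add: Rats_divide)
  then show False
    using \<open>\<alpha> \<notin> \<rat>\<close> by contradiction
qed

lemma harmonic_coeffs_eq_0_if_normal_derivs_vanish:
  assumes "harmonic_coeffs (Suc n) p"
    and "hom_dirderiv (rot (pi / 2) e) p n e = 0"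
    and "hom_dirderiv (rot (pi / 2) (rot (\<alpha> * pi) e)) p n (rot (\<alpha> * pi) e) = 0"
    and "e \<noteq> 0" "\<alpha> \<notin> \<rat>" "i \<le> Suc n"
  shows "p i = 0"
proof -
  obtain a b where decomp: "\<And>i. i \<le> Suc n \<Longrightarrow> p i = a * binom_coeffs \<i> (Suc n) i + b * binom_coeffs (-\<i>) (Suc n) i"
    using harmonic_coeffs_decomp[OF assms(1)] by blast
  define z where "z = complex_of_pt e"
  define \<phi> where "\<phi> = real (Suc n) * (\<alpha> * pi)"
  have on_e: "a * z ^ Suc n = b * cnj z ^ Suc n"
    using hom_dirderiv_normal_eq_0_iff[OF decomp] assms(2) unfolding z_def by blast
  have "a * complex_of_pt (rot (\<alpha> * pi) e) ^ Suc n = b * cnj (complex_of_pt (rot (\<alpha> * pi) e)) ^ Suc n"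
    using hom_dirderiv_normal_eq_0_iff[OF decomp] assms(3) by blast
  then have "a * (cis (\<alpha> * pi) * z) ^ Suc n = b * (cis (- (\<alpha> * pi)) * cnj z) ^ Suc n"
    unfolding complex_of_pt_rot complex_cnj_mult cis_cnj z_def .
  then have on_rotated: "a * z ^ Suc n * cis \<phi> = b * cnj z ^ Suc n * cis (- \<phi>)"
    unfolding power_mult_distrib Complex.DeMoivre \<phi>_def mult_minus_right by (simp only: mult_ac)
  have "b * cnj z ^ Suc n * (cis \<phi> - cis (- \<phi>))
      = a * z ^ Suc n * cis \<phi> - b * cnj z ^ Suc n * cis (- \<phi>)"
    by (simp only: on_e right_diff_distrib)
  also have "\<dots> = 0"
    by (simp only: on_rotated diff_self)
  finally have "b * cnj z ^ Suc n * (cis \<phi> - cis (- \<phi>)) = 0" .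
  moreover have "cis \<phi> \<noteq> cis (- \<phi>)"
    unfolding \<phi>_def using \<open>\<alpha> \<notin> \<rat>\<close> by (rule cis_neq_cis_uminus_if_irrational) simp
  moreover have "z \<noteq> 0"
    using \<open>e \<noteq> 0\<close> by (simp add: z_def complex_of_pt_eq_0_iff)
  ultimately have "b = 0"
    by simp
  with on_e \<open>z \<noteq> 0\<close> have "a = 0"
    by simp
  with \<open>b = 0\<close> show ?thesis
    using decomp[OF \<open>i \<le> Suc n\<close>] by simp
qed

section \<open>Double power series\<close>

text \<open>c i j is the coefficient of x^i y^j; double power series are summed by total degree.\<close>
definition hom_part :: "(nat \<Rightarrow> nat \<Rightarrow> complex) \<Rightarrow> nat \<Rightarrow> pt \<Rightarrow> complex" where
  "hom_part c n = hom_poly (\<lambda>i. c i (n - i)) n"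

definition hom_norm :: "(nat \<Rightarrow> nat \<Rightarrow> complex) \<Rightarrow> nat \<Rightarrow> real" where
  "hom_norm c n = (\<Sum>i\<le>n. norm (c i (n - i)))"

definition powser2_conv :: "(nat \<Rightarrow> nat \<Rightarrow> complex) \<Rightarrow> real \<Rightarrow> bool" where
  "powser2_conv c \<rho> \<longleftrightarrow> (\<forall>\<sigma>. 0 \<le> \<sigma> \<and> \<sigma> < \<rho> \<longrightarrow> summable (\<lambda>n. hom_norm c n * \<sigma> ^ n))"

definition powser2 :: "(nat \<Rightarrow> nat \<Rightarrow> complex) \<Rightarrow> pt \<Rightarrow> complex" where
  "powser2 c v = (\<Sum>n. hom_part c n v)"

definition dx_coeffs :: "(nat \<Rightarrow> nat \<Rightarrow> complex) \<Rightarrow> nat \<Rightarrow> nat \<Rightarrow> complex" where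
  "dx_coeffs c i j = of_nat (Suc i) * c (Suc i) j"

definition dy_coeffs :: "(nat \<Rightarrow> nat \<Rightarrow> complex) \<Rightarrow> nat \<Rightarrow> nat \<Rightarrow> complex" where
  "dy_coeffs c i j = of_nat (Suc j) * c i (Suc j)"

lemma hom_part_add: "hom_part (\<lambda>i j. c i j + d i j) n v = hom_part c n v + hom_part d n v"
  by (simp add: hom_part_def hom_poly_add)

lemma hom_part_cmult: "hom_part (\<lambda>i j. a * c i j) n v = a * hom_part c n v"
  by (simp add: hom_part_def hom_poly_cmult)

lemma hom_part_scaleR: "hom_part c n (t *\<^sub>R v) = of_real t ^ n * hom_part c n v"
  by (simp add: hom_part_def hom_poly_scaleR)

lemma hom_norm_nonneg: "0 \<le> hom_norm c n"
  by (simp add: hom_norm_def sum_nonneg)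

lemma norm_hom_part_le: "norm v \<le> \<sigma> \<Longrightarrow> norm (hom_part c n v) \<le> hom_norm c n * \<sigma> ^ n"
  unfolding hom_part_def hom_norm_def by (rule norm_hom_poly_le)

lemma hom_part_sums_powser2:
  assumes "powser2_conv c \<rho>" "norm v < \<rho>"
  shows "(\<lambda>n. hom_part c n v) sums powser2 c v"
proof -
  have "summable (\<lambda>n. hom_norm c n * norm v ^ n)"
    using assms by (simp add: powser2_conv_def)
  then have "summable (\<lambda>n. norm (hom_part c n v))"
    by (rule summable_comparison_test') (simp add: norm_hom_part_le)
  then show ?thesis
    unfolding powser2_def by (rule summable_sums[OF summable_norm_cancel])
qed

lemma powser2_zero: "powser2 c 0 = c 0 0"
proof -
  have "hom_part c n 0 = (if n = 0 then c 0 0 else 0)" for n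
    by (auto simp: hom_part_def hom_poly_def zero_prod_def power_0_left intro!: sum.neutral)
  then show ?thesis
    using sums_single[of 0 "\<lambda>_. c 0 0"] by (simp add: powser2_def sums_iff)
qed

lemma hom_dirderiv_slice:
  "hom_dirderiv d (\<lambda>i. c i (Suc n - i)) n v
     = of_real (fst d) * hom_part (dx_coeffs c) n v + of_real (snd d) * hom_part (dy_coeffs c) n v"
proof -
  have "hom_poly (\<lambda>i. of_nat (Suc n - i) * c i (Suc n - i)) n = hom_part (dy_coeffs c) n"
    unfolding hom_part_def dy_coeffs_def by (rule hom_poly_cong) (simp add: Suc_diff_le)
  then show ?thesis
    by (simp add: hom_dirderiv_def hom_part_def dx_coeffs_def)
qed

lemma powser2_conv_if_hom_norm_le:
  assumes "powser2_conv c \<rho>" and le: "\<And>n. hom_norm d n \<le> of_nat (Suc n) * hom_norm c (Suc n)"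
  shows "powser2_conv d \<rho>"
  unfolding powser2_conv_def
proof (intro allI impI)
  fix \<sigma> :: real assume \<sigma>: "0 \<le> \<sigma> \<and> \<sigma> < \<rho>"
  have "summable (\<lambda>n. diffs (hom_norm c) n * \<sigma> ^ n)"
  proof (rule termdiff_converges[of _ \<rho>])
    fix x :: real assume "norm x < \<rho>"
    then have "summable (\<lambda>n. norm (hom_norm c n * x ^ n))"
      using assms(1) by (simp add: powser2_conv_def abs_mult power_abs hom_norm_nonneg)
    then show "summable (\<lambda>n. hom_norm c n * x ^ n)"
      by (rule summable_norm_cancel)
  qed (use \<sigma> in simp)
  then show "summable (\<lambda>n. hom_norm d n * \<sigma> ^ n)"
    by (rule summable_comparison_test')
      (use \<sigma> le in \<open>simp add: diffs_def hom_norm_nonneg mult_right_mono\<close>)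
qed

lemma powser2_conv_dx_coeffs:
  assumes "powser2_conv c \<rho>"
  shows "powser2_conv (dx_coeffs c) \<rho>"
proof (rule powser2_conv_if_hom_norm_le[OF assms])
  fix n
  have "hom_norm (dx_coeffs c) n = (\<Sum>i\<le>n. of_nat (Suc i) * norm (c (Suc i) (Suc n - Suc i)))"
    by (simp add: hom_norm_def dx_coeffs_def norm_mult del: of_nat_Suc)
  also have "\<dots> \<le> (\<Sum>i\<le>n. of_nat (Suc n) * norm (c (Suc i) (Suc n - Suc i)))"
    by (intro sum_mono mult_right_mono) auto
  also have "\<dots> \<le> of_nat (Suc n) * (norm (c 0 (Suc n - 0)) + (\<Sum>i\<le>n. norm (c (Suc i) (Suc n - Suc i))))"
    by (simp add: sum_distrib_left distrib_left)
  also have "\<dots> = of_nat (Suc n) * hom_norm c (Suc n)"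
    unfolding hom_norm_def sum.atMost_Suc_shift by simp
  finally show "hom_norm (dx_coeffs c) n \<le> of_nat (Suc n) * hom_norm c (Suc n)" .
qed

lemma powser2_conv_dy_coeffs:
  assumes "powser2_conv c \<rho>"
  shows "powser2_conv (dy_coeffs c) \<rho>"
proof (rule powser2_conv_if_hom_norm_le[OF assms])
  fix n
  have "hom_norm (dy_coeffs c) n = (\<Sum>i\<le>n. of_nat (Suc n - i) * norm (c i (Suc n - i)))"
    by (auto simp: hom_norm_def dy_coeffs_def norm_mult Suc_diff_le simp del: of_nat_Suc
        intro!: sum.cong)
  also have "\<dots> \<le> (\<Sum>i\<le>n. of_nat (Suc n) * norm (c i (Suc n - i)))"
    by (intro sum_mono mult_right_mono) auto
  also have "\<dots> \<le> of_nat (Suc n) * hom_norm c (Suc n)"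
    by (simp add: hom_norm_def sum_distrib_left distrib_left)
  finally show "hom_norm (dy_coeffs c) n \<le> of_nat (Suc n) * hom_norm c (Suc n)" .
qed

lemma hom_dirderiv_sums:
  assumes "powser2_conv c \<rho>" "norm v < \<rho>"
  shows "(\<lambda>n. hom_dirderiv d (\<lambda>i. c i (Suc n - i)) n v)
           sums (of_real (fst d) * powser2 (dx_coeffs c) v + of_real (snd d) * powser2 (dy_coeffs c) v)"
  unfolding hom_dirderiv_slice
  by (intro sums_add sums_mult hom_part_sums_powser2[OF _ assms(2)]
      powser2_conv_dx_coeffs powser2_conv_dy_coeffs assms(1))

lemma norm_hom_dirderiv_slice_le:
  assumes "norm y \<le> \<sigma>"
  shows "norm (hom_dirderiv d (\<lambda>i. c i (Suc n - i)) n y)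
           \<le> (hom_norm (dx_coeffs c) n + hom_norm (dy_coeffs c) n) * \<sigma> ^ n * norm d"
proof -
  have fst_le: "\<bar>fst d\<bar> \<le> norm d" and snd_le: "\<bar>snd d\<bar> \<le> norm d"
    using norm_fst_le[of "fst d" "snd d"] norm_snd_le[of "snd d" "fst d"] by auto
  have "norm (hom_dirderiv d (\<lambda>i. c i (Suc n - i)) n y)
      \<le> norm (of_real (fst d) * hom_part (dx_coeffs c) n y) + norm (of_real (snd d) * hom_part (dy_coeffs c) n y)"
    unfolding hom_dirderiv_slice by (rule norm_triangle_ineq)
  also have "\<dots> \<le> norm d * (hom_norm (dx_coeffs c) n * \<sigma> ^ n) + norm d * (hom_norm (dy_coeffs c) n * \<sigma> ^ n)"
    unfolding norm_mult norm_of_real using norm_hom_part_le[OF assms] fst_le snd_le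
    by (intro add_mono mult_mono) auto
  finally show ?thesis
    by (simp add: algebra_simps)
qed

lemma hom_part_Suc_sums:
  assumes "powser2_conv c \<rho>" "norm v < \<rho>"
  shows "(\<lambda>n. hom_part c (Suc n) v) sums (powser2 c v - c 0 0)"
proof -
  have "hom_part c 0 v = c 0 0"
    by (simp add: hom_part_def hom_poly_def)
  then show ?thesis
    using hom_part_sums_powser2[OF assms] sums_Suc_iff[of "\<lambda>n. hom_part c n v" "powser2 c v - c 0 0"]
    by simp
qed

lemma has_derivative_powser2:
  assumes conv: "powser2_conv c \<rho>" and "norm v < \<rho>"
  shows "(powser2 c has_derivative
           (\<lambda>d. of_real (fst d) * powser2 (dx_coeffs c) v + of_real (snd d) * powser2 (dy_coeffs c) v)) (at v)"
proof -
  define \<sigma> where "\<sigma> = (norm v + \<rho>) / 2"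
  have "norm v < \<sigma>" "\<sigma> < \<rho>"
    using \<open>norm v < \<rho>\<close> by (auto simp: \<sigma>_def)
  then have "0 \<le> \<sigma>"
    using norm_ge_zero[of v] by linarith
  define M where "M n = (hom_norm (dx_coeffs c) n + hom_norm (dy_coeffs c) n) * \<sigma> ^ n" for n
  have "summable M"
    using powser2_conv_dx_coeffs[OF conv] powser2_conv_dy_coeffs[OF conv] \<open>0 \<le> \<sigma>\<close> \<open>\<sigma> < \<rho>\<close>
    unfolding M_def distrib_right powser2_conv_def by (intro summable_add) auto
  have tail_sums: "(\<lambda>n. hom_part c (Suc n) y) sums (powser2 c y - c 0 0)" if "y \<in> ball 0 \<sigma>" for y
    using hom_part_Suc_sums[OF conv] that \<open>\<sigma> < \<rho>\<close> by simp
  have deriv_tail: "((\<lambda>y. \<Sum>n. hom_part c (Suc n) y) has_derivative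
          (\<lambda>d. \<Sum>n. hom_dirderiv d (\<lambda>i. c i (Suc n - i)) n v)) (at v)"
    unfolding hom_part_def
  proof (rule has_derivative_suminf_dominated[where S="ball 0 \<sigma>", OF convex_ball open_ball _
        has_derivative_hom_poly _ \<open>summable M\<close>])
    show "norm (hom_dirderiv d (\<lambda>i. c i (Suc n - i)) n y) \<le> M n * norm d" if "y \<in> ball 0 \<sigma>" for n y d
      using norm_hom_dirderiv_slice_le[of y \<sigma>] that by (simp add: M_def)
    show "summable (\<lambda>n. hom_poly (\<lambda>i. c i (Suc n - i)) (Suc n) y)" if "y \<in> ball 0 \<sigma>" for y
      using tail_sums[OF that] by (auto simp: hom_part_def sums_iff)
  qed (use \<open>norm v < \<sigma>\<close> in simp)
  have deriv_eq: "(\<lambda>d. \<Sum>n. hom_dirderiv d (\<lambda>i. c i (Suc n - i)) n v)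
      = (\<lambda>d. of_real (fst d) * powser2 (dx_coeffs c) v + of_real (snd d) * powser2 (dy_coeffs c) v)"
    using hom_dirderiv_sums[OF conv \<open>norm v < \<rho>\<close>] by (simp add: sums_iff)
  have "((\<lambda>y. (\<Sum>n. hom_part c (Suc n) y) + c 0 0) has_derivative
      (\<lambda>d. of_real (fst d) * powser2 (dx_coeffs c) v + of_real (snd d) * powser2 (dy_coeffs c) v)) (at v)"
    using has_derivative_add_const[OF deriv_tail] unfolding deriv_eq .
  then show ?thesis
    by (rule has_derivative_transform_within_open[where s="ball 0 \<sigma>", OF _ open_ball])
      (use tail_sums \<open>norm v < \<sigma>\<close> in \<open>simp_all add: sums_iff\<close>)
qed

lemma dirderiv_powser2:
  assumes "powser2_conv c \<rho>" "\<And>y. y \<in> ball x0 \<rho> \<Longrightarrow> f y = powser2 c (y - x0)" "x \<in> ball x0 \<rho>"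
  shows "dirderiv d f x = of_real (fst d) * powser2 (dx_coeffs c) (x - x0)
                        + of_real (snd d) * powser2 (dy_coeffs c) (x - x0)"
proof -
  have "norm (x - x0) < \<rho>"
    using \<open>x \<in> ball x0 \<rho>\<close> by (simp add: dist_norm norm_minus_commute)
  have "((\<lambda>y. y - x0) has_derivative (\<lambda>h. h)) (at x)"
    by (auto intro!: derivative_eq_intros)
  from diff_chain_at[OF this has_derivative_powser2[OF assms(1) \<open>norm (x - x0) < \<rho>\<close>]]
  have "((\<lambda>y. powser2 c (y - x0)) has_derivative (\<lambda>d. of_real (fst d) * powser2 (dx_coeffs c) (x - x0)
      + of_real (snd d) * powser2 (dy_coeffs c) (x - x0))) (at x)"
    by (simp add: o_def)
  then have "dirderiv d (\<lambda>y. powser2 c (y - x0)) x = of_real (fst d) * powser2 (dx_coeffs c) (x - x0)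
      + of_real (snd d) * powser2 (dy_coeffs c) (x - x0)"
    by (rule dirderiv_eq_if_has_derivative)
  then show ?thesis
    using dirderiv_cong_open[OF open_ball assms(3), of f "\<lambda>y. powser2 c (y - x0)"] assms(2) by simp
qed

lemma coeffs_eq_0_if_hom_parts_sum_0:
  assumes "\<delta> > 0" and sums0: "\<And>v. norm v < \<delta> \<Longrightarrow> (\<lambda>n. hom_part c n v) sums 0"
  shows "c i j = 0"
proof -
  have hom_part_0: "hom_part c n w = 0" for n w
  proof (rule powser_coeffs_eq_0_if_sums_0_at_right[where a="\<lambda>n. hom_part c n w"])
    have "0 < norm w + 1"
      using norm_ge_zero[of w] by linarith
    then show "\<delta> / (norm w + 1) > 0"
      using \<open>\<delta> > 0\<close> by simp
    fix t :: real assume "0 < t" "t < \<delta> / (norm w + 1)"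
    then have "t * (norm w + 1) < \<delta>"
      using pos_less_divide_eq[OF \<open>0 < norm w + 1\<close>] by blast
    then have "norm (t *\<^sub>R w) < \<delta>"
      using \<open>0 < t\<close> by (simp add: distrib_left)
    then have "(\<lambda>n. hom_part c n (t *\<^sub>R w)) sums 0"
      by (rule sums0)
    then show "(\<lambda>n. hom_part c n w * of_real t ^ n) sums 0"
      by (simp add: hom_part_scaleR mult.commute)
  qed
  let ?N = "i + j"
  have "(\<Sum>k\<le>?N. c k (?N - k) * of_real x ^ k) = 0" for x :: real
    using hom_part_0[of ?N "(x, 1)"] by (simp add: hom_part_def hom_poly_def)
  then have "range complex_of_real \<subseteq> {z. (\<Sum>k\<le>?N. c k (?N - k) * z ^ k) = 0}"
    by auto
  moreover have "infinite (range complex_of_real)"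
    using finite_imageD[OF _ inj_of_real] infinite_UNIV_char_0[where 'a=real] by blast
  ultimately have "infinite {z. (\<Sum>k\<le>?N. c k (?N - k) * z ^ k) = 0}"
    using finite_subset by blast
  then have "\<forall>k\<le>?N. c k (?N - k) = 0"
    using polyfun_finite_roots[of "\<lambda>k. c k (?N - k)" ?N] by auto
  then show ?thesis
    by (metis add_diff_cancel_left' le_add1)
qed

section \<open>Solutions near the corner\<close>

lemma powser2_conv_if_summable_on_diagonal:
  assumes "\<And>\<sigma>. 0 \<le> \<sigma> \<Longrightarrow> \<sigma> < \<rho> \<Longrightarrow> (\<lambda>(i, j). c i j * of_real (\<sigma> ^ i * \<sigma> ^ j)) summable_on UNIV"
  shows "powser2_conv c \<rho>"
  unfolding powser2_conv_def
proof (intro allI impI)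
  fix \<sigma> :: real assume \<sigma>: "0 \<le> \<sigma> \<and> \<sigma> < \<rho>"
  then obtain s where "((\<lambda>(i, j). norm (c i j * of_real (\<sigma> ^ i * \<sigma> ^ j))) has_sum s) UNIV"
    using assms unfolding summable_on_iff_abs_summable_on_complex summable_on_def
    by (auto simp: case_prod_unfold)
  from has_sum_antidiagonal_sums[OF this]
  have "(\<lambda>n. \<Sum>i\<le>n. norm (c i (n - i) * of_real (\<sigma> ^ i * \<sigma> ^ (n - i)))) sums s"
    by simp
  moreover have "(\<Sum>i\<le>n. norm (c i (n - i) * of_real (\<sigma> ^ i * \<sigma> ^ (n - i)))) = hom_norm c n * \<sigma> ^ n" for n
    using \<sigma> by (simp add: hom_norm_def sum_distrib_right norm_mult norm_power abs_mult flip: power_add)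
  ultimately show "summable (\<lambda>n. hom_norm c n * \<sigma> ^ n)"
    by (simp add: sums_iff)
qed

lemma real_analytic_on_imp_powser2:
  assumes "real_analytic_on u S" "open S" "x0 \<in> S"
  obtains \<rho> c where "\<rho> > 0" "ball x0 \<rho> \<subseteq> S" "powser2_conv c \<rho>"
    "\<And>y. y \<in> ball x0 \<rho> \<Longrightarrow> u y = powser2 c (y - x0)"
proof -
  obtain r c where "r > 0" and expansion: "\<And>y. y \<in> ball x0 r \<Longrightarrow>
      ((\<lambda>(i, j). c i j * of_real ((fst y - fst x0) ^ i * (snd y - snd x0) ^ j)) has_sum u y) UNIV"
    using assms(1,3) unfolding real_analytic_on_def by blast
  obtain \<epsilon> where "\<epsilon> > 0" "ball x0 \<epsilon> \<subseteq> S"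
    using assms(2,3) openE by blast
  define \<rho> where "\<rho> = min (r / 2) \<epsilon>"
  have in_ball: "x0 + v \<in> ball x0 r" if "norm v < r" for v
    using that by (simp add: dist_norm)
  have "powser2_conv c \<rho>"
  proof (rule powser2_conv_if_summable_on_diagonal)
    fix \<sigma> :: real assume "0 \<le> \<sigma>" "\<sigma> < \<rho>"
    then have "norm (\<sigma>, \<sigma>) < r"
      using norm_Pair_le[of \<sigma> \<sigma>] by (simp add: \<rho>_def)
    from expansion[OF in_ball[OF this]]
    show "(\<lambda>(i, j). c i j * of_real (\<sigma> ^ i * \<sigma> ^ j)) summable_on UNIV"
      by (simp add: has_sum_imp_summable)
  qed
  moreover have "u y = powser2 c (y - x0)" if "y \<in> ball x0 \<rho>" for y
  proof -
    have "norm (y - x0) < r"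
      using that \<open>r > 0\<close> by (simp add: \<rho>_def dist_norm norm_minus_commute)
    from has_sum_antidiagonal_sums[OF expansion[OF in_ball[OF this]]]
    have "(\<lambda>n. hom_part c n (y - x0)) sums u y"
      by (simp add: hom_part_def hom_poly_def mult.assoc)
    then show ?thesis
      by (simp add: powser2_def sums_iff)
  qed
  moreover have "\<rho> > 0" "ball x0 \<rho> \<subseteq> S"
    using \<open>r > 0\<close> \<open>\<epsilon> > 0\<close> \<open>ball x0 \<epsilon> \<subseteq> S\<close> by (auto simp: \<rho>_def)
  ultimately show ?thesis
    using that by blast
qed

lemma helmholtz_coeff_recurrence:
  assumes conv: "powser2_conv c \<rho>" and "\<rho> > 0"
    and repr: "\<And>y. y \<in> ball x0 \<rho> \<Longrightarrow> u y = powser2 c (y - x0)"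
    and helmholtz: "\<And>x. x \<in> ball x0 \<rho> \<Longrightarrow> - laplacian u x = of_real lam * u x"
  shows "dx_coeffs (dx_coeffs c) i j + dy_coeffs (dy_coeffs c) i j + of_real lam * c i j = 0"
proof (rule coeffs_eq_0_if_hom_parts_sum_0[OF \<open>\<rho> > 0\<close>,
      where c="\<lambda>i j. dx_coeffs (dx_coeffs c) i j + dy_coeffs (dy_coeffs c) i j + of_real lam * c i j"])
  fix v :: pt assume "norm v < \<rho>"
  define x where "x = x0 + v"
  have "x \<in> ball x0 \<rho>"
    using \<open>norm v < \<rho>\<close> by (simp add: x_def dist_norm)
  have dx: "dirderiv (1, 0) u y = powser2 (dx_coeffs c) (y - x0)"
    and dy: "dirderiv (0, 1) u y = powser2 (dy_coeffs c) (y - x0)" if "y \<in> ball x0 \<rho>" for y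
    using dirderiv_powser2[OF conv repr that] by simp_all
  have "pdiff 2 0 u x = powser2 (dx_coeffs (dx_coeffs c)) v"
    using dirderiv_powser2[OF powser2_conv_dx_coeffs[OF conv] dx \<open>x \<in> ball x0 \<rho>\<close>, of "(1, 0)"]
    by (simp add: pdiff_def numeral_2_eq_2 x_def)
  moreover have "pdiff 0 2 u x = powser2 (dy_coeffs (dy_coeffs c)) v"
    using dirderiv_powser2[OF powser2_conv_dy_coeffs[OF conv] dy \<open>x \<in> ball x0 \<rho>\<close>, of "(0, 1)"]
    by (simp add: pdiff_def numeral_2_eq_2 x_def)
  ultimately have "powser2 (dx_coeffs (dx_coeffs c)) v + powser2 (dy_coeffs (dy_coeffs c)) v
      + of_real lam * powser2 c v = 0"
    using helmholtz[OF \<open>x \<in> ball x0 \<rho>\<close>] repr[OF \<open>x \<in> ball x0 \<rho>\<close>]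
    by (simp add: laplacian_def x_def add_eq_0_iff)
  moreover have "(\<lambda>n. hom_part (\<lambda>i j. dx_coeffs (dx_coeffs c) i j + dy_coeffs (dy_coeffs c) i j
      + of_real lam * c i j) n v) sums (powser2 (dx_coeffs (dx_coeffs c)) v
      + powser2 (dy_coeffs (dy_coeffs c)) v + of_real lam * powser2 c v)"
    unfolding hom_part_add hom_part_cmult
    by (intro sums_add sums_mult hom_part_sums_powser2[OF _ \<open>norm v < \<rho>\<close>] conv
        powser2_conv_dx_coeffs powser2_conv_dy_coeffs)
  ultimately show "(\<lambda>n. hom_part (\<lambda>i j. dx_coeffs (dx_coeffs c) i j + dy_coeffs (dy_coeffs c) i j
      + of_real lam * c i j) n v) sums 0"
    by simp
qed

lemma robin_hom_parts_sums:
  assumes conv: "powser2_conv c \<rho>" and repr: "\<And>y. y \<in> ball x0 \<rho> \<Longrightarrow> u y = powser2 c (y - x0)"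
    and "norm v < \<rho>"
  shows "(\<lambda>n. hom_dirderiv d (\<lambda>i. c i (Suc n - i)) n v + \<eta> * hom_part c n v)
           sums (dirderiv d u (x0 + v) + \<eta> * u (x0 + v))"
proof -
  have "x0 + v \<in> ball x0 \<rho>"
    using \<open>norm v < \<rho>\<close> by (simp add: dist_norm)
  then have "dirderiv d u (x0 + v) + \<eta> * u (x0 + v)
      = of_real (fst d) * powser2 (dx_coeffs c) v + of_real (snd d) * powser2 (dy_coeffs c) v
        + \<eta> * powser2 c v"
    using dirderiv_powser2[OF conv repr] repr by simp
  then show ?thesis
    by (simp only:) (intro sums_add sums_mult hom_dirderiv_sums[OF conv] hom_part_sums_powser2[OF conv]
        \<open>norm v < \<rho>\<close>)
qed

lemma singular_line_hom_parts:
  assumes conv: "powser2_conv c \<rho>" and "\<rho> > 0"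
    and repr: "\<And>y. y \<in> ball x0 \<rho> \<Longrightarrow> u y = powser2 c (y - x0)"
    and "h > 0" and line: "gen_singular_line u x0 e h \<eta>"
  shows "hom_dirderiv (rot (pi / 2) e) (\<lambda>i. c i (Suc n - i)) n e + \<eta> * hom_part c n e = 0"
proof (rule powser_coeffs_eq_0_if_sums_0_at_right[where
      a="\<lambda>n. hom_dirderiv (rot (pi / 2) e) (\<lambda>i. c i (Suc n - i)) n e + \<eta> * hom_part c n e"])
  have "0 < norm e + 1"
    using norm_ge_zero[of e] by linarith
  then show "min h (\<rho> / (norm e + 1)) > 0"
    using \<open>h > 0\<close> \<open>\<rho> > 0\<close> by simp
  fix t :: real assume "0 < t" "t < min h (\<rho> / (norm e + 1))"
  then have "t * (norm e + 1) < \<rho>"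
    using pos_less_divide_eq[OF \<open>0 < norm e + 1\<close>] by auto
  then have "norm (t *\<^sub>R e) < \<rho>"
    using \<open>0 < t\<close> by (simp add: distrib_left)
  have "x0 + t *\<^sub>R e \<in> closed_segment x0 (x0 + h *\<^sub>R e)"
    unfolding in_segment
    by (rule exI[where x="t / h"]) (use \<open>0 < t\<close> \<open>t < min h _\<close> \<open>h > 0\<close> in \<open>auto simp: algebra_simps\<close>)
  then have "dirderiv (rot (pi / 2) e) u (x0 + t *\<^sub>R e) + \<eta> * u (x0 + t *\<^sub>R e) = 0"
    using line unfolding gen_singular_line_def by blast
  then show "(\<lambda>n. (hom_dirderiv (rot (pi / 2) e) (\<lambda>i. c i (Suc n - i)) n e + \<eta> * hom_part c n e)
      * of_real t ^ n) sums 0"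
    using robin_hom_parts_sums[OF conv repr \<open>norm (t *\<^sub>R e) < \<rho>\<close>, of "rot (pi / 2) e" \<eta>]
    by (simp add: hom_dirderiv_scaleR hom_part_scaleR algebra_simps)
qed

lemma next_degree_coeffs_eq_0:
  assumes lower: "\<And>i j. i + j \<le> n \<Longrightarrow> c i j = 0"
    and helmholtz: "\<And>i j. dx_coeffs (dx_coeffs c) i j + dy_coeffs (dy_coeffs c) i j + lam * c i j = 0"
    and line1: "hom_dirderiv (rot (pi / 2) e) (\<lambda>i. c i (Suc n - i)) n e + \<eta>1 * hom_part c n e = 0"
    and line2: "hom_dirderiv (rot (pi / 2) (rot (\<alpha> * pi) e)) (\<lambda>i. c i (Suc n - i)) n (rot (\<alpha> * pi) e)
                  + \<eta>2 * hom_part c n (rot (\<alpha> * pi) e) = 0"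
    and "e \<noteq> 0" "\<alpha> \<notin> \<rat>" "i \<le> Suc n"
  shows "c i (Suc n - i) = 0"
proof -
  have "hom_part c n v = 0" for v
    using lower by (simp add: hom_part_def hom_poly_def)
  moreover have "harmonic_coeffs (Suc n) (\<lambda>i. c i (Suc n - i))"
    unfolding harmonic_coeffs_def
  proof (intro allI impI)
    fix i j assume "i + j + 2 = Suc n"
    then have "c i j = 0" "Suc n - Suc (Suc i) = j" "Suc n - i = Suc (Suc j)"
      using lower by auto
    then show "of_nat (Suc i * Suc (Suc i)) * c (Suc (Suc i)) (Suc n - Suc (Suc i))
        + of_nat (Suc j * Suc (Suc j)) * c i (Suc n - i) = 0"
      using helmholtz[of i j] unfolding of_nat_mult
      by (simp add: dx_coeffs_def dy_coeffs_def mult.assoc del: of_nat_Suc)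
  qed
  ultimately show ?thesis
    using harmonic_coeffs_eq_0_if_normal_derivs_vanish line1 line2 assms(5-) by simp
qed

lemma coeffs_eq_0_if_two_singular_lines:
  assumes "c 0 0 = 0"
    and helmholtz: "\<And>i j. dx_coeffs (dx_coeffs c) i j + dy_coeffs (dy_coeffs c) i j + lam * c i j = 0"
    and line1: "\<And>n. hom_dirderiv (rot (pi / 2) e) (\<lambda>i. c i (Suc n - i)) n e + \<eta>1 * hom_part c n e = 0"
    and line2: "\<And>n. hom_dirderiv (rot (pi / 2) (rot (\<alpha> * pi) e)) (\<lambda>i. c i (Suc n - i)) n (rot (\<alpha> * pi) e)
                    + \<eta>2 * hom_part c n (rot (\<alpha> * pi) e) = 0"
    and "e \<noteq> 0" "\<alpha> \<notin> \<rat>"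
  shows "c i j = 0"
proof -
  have "\<forall>k\<le>N. c k (N - k) = 0" for N
  proof (induction N rule: less_induct)
    case (less N)
    have lower: "c i j = 0" if "i + j < N" for i j
      using less.IH[OF that] by (metis add_diff_cancel_left' le_add1)
    show ?case
    proof (cases N)
      case 0
      then show ?thesis using \<open>c 0 0 = 0\<close> by simp
    next
      case (Suc n)
      then show ?thesis
        using next_degree_coeffs_eq_0[OF _ helmholtz line1 line2 \<open>e \<noteq> 0\<close> \<open>\<alpha> \<notin> \<rat>\<close>] lower
        by simp
    qed
  qed
  then show ?thesis
    by (metis add_diff_cancel_left' le_add1)
qed

theorem theorem4p1:
  fixes \<Omega> :: "pt set" and lam :: real and u :: "pt \<Rightarrow> complex"
    and x0 em ep :: pt and h \<alpha> :: real and C1 C2 :: complex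
  assumes "open \<Omega>" and "lam > 0"
    and "set_borel_measurable lborel \<Omega> u"
    and "set_integrable lborel \<Omega> (\<lambda>x. (cmod (u x))\<^sup>2)"
    and "real_analytic_on u \<Omega>"
    and "\<forall>x\<in>\<Omega>. - laplacian u x = of_real lam * u x"
    and "x0 \<in> \<Omega>" and "h > 0"
    and "norm em = 1" and "0 < \<alpha>" and "\<alpha> < 2" and "\<alpha> \<notin> \<rat>"
    and "ep = rot (\<alpha> * pi) em"
    and "closed_segment x0 (x0 + h *\<^sub>R em) \<subseteq> \<Omega>"
    and "closed_segment x0 (x0 + h *\<^sub>R ep) \<subseteq> \<Omega>"
    and "C1 \<noteq> 0" and "C2 \<noteq> 0"
    and "gen_singular_line u x0 em h C1"
    and "gen_singular_line u x0 ep h C2"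
  shows "(u x0 \<noteq> 0 \<longrightarrow> Vani u x0 = 0) \<and> (u x0 = 0 \<longrightarrow> Vani u x0 = \<infinity>)"
proof (intro conjI impI)
  assume "u x0 \<noteq> 0"
  then show "Vani u x0 = 0"
    by (rule Vani_eq_0_if_nonzero)
next
  assume "u x0 = 0"
  obtain \<rho> c where "\<rho> > 0" "ball x0 \<rho> \<subseteq> \<Omega>" and conv: "powser2_conv c \<rho>"
    and repr: "\<And>y. y \<in> ball x0 \<rho> \<Longrightarrow> u y = powser2 c (y - x0)"
    using real_analytic_on_imp_powser2[OF assms(5,1,7)] by blast
  have "c 0 0 = 0"
    using repr[of x0] \<open>\<rho> > 0\<close> \<open>u x0 = 0\<close> by (simp add: powser2_zero)
  moreover have "dx_coeffs (dx_coeffs c) i j + dy_coeffs (dy_coeffs c) i j + of_real lam * c i j = 0" for i j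
    using helmholtz_coeff_recurrence[OF conv \<open>\<rho> > 0\<close> repr] assms(6) \<open>ball x0 \<rho> \<subseteq> \<Omega>\<close> by blast
  moreover have "em \<noteq> 0"
    using \<open>norm em = 1\<close> by auto
  ultimately have "c i j = 0" for i j
    using coeffs_eq_0_if_two_singular_lines
      singular_line_hom_parts[OF conv \<open>\<rho> > 0\<close> repr \<open>h > 0\<close> assms(18)]
      singular_line_hom_parts[OF conv \<open>\<rho> > 0\<close> repr \<open>h > 0\<close> assms(19)[unfolded assms(13)]]
      \<open>\<alpha> \<notin> \<rat>\<close> by blast
  then have "u y = 0" if "y \<in> ball x0 \<rho>" for y
    using repr[OF that] by (simp add: powser2_def hom_part_def hom_poly_def)
  moreover have "x0 \<in> ball x0 \<rho>"
    using \<open>\<rho> > 0\<close> by simp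
  ultimately show "Vani u x0 = \<infinity>"
    by (intro Vani_eq_infinity_if_vanishes_on_open[OF open_ball])
qed

end
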